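(* Suppose that for every $e\in E$ the restriction $p_e|_{K_{i(e)}}$ is Dini-continuous and that there exists $\delta>0$ with $p_e|_{K_{i(e)}}\ge\delta$ for all $e\in E$. Let $x_i\in K_i$ for all $1\le i\le N$ and $x\in K$. Then for every integer $m\le 0$ the measure $P^m_x$ is absolutely continuous with respect to $P^m_{x_1\dots x_N}$ on $(\Sigma,\mathcal{A}_m)$.
   Context: A contractive Markov system (CMS) with average contracting rate $0<a<1$ consists of: a finite directed multigraph $(V,E,i,t)$ with vertex set $V=\{1,\dots,N\}$, finite edge set $E$, and maps $i,t:E\to V$ giving the initial and terminal vertex of each edge; a complete metric space $(K,d)$ partitioned into non-empty Borel sets $K_1,\dots,K_N$; Borel measurable maps $w_e:K\to K$ ($e\in E$) with $w_e(K_{i(e)})\subset K_{t(e)}$; Borel measurable functions $p_e:K\to[0,\infty)$ with $\sum_{e\in E}p_e(x)=1$ for all $x\in K$ and $p_e=0$ on $K\setminus K_{i(e)}$; and such that $\sum_{e\in E}p_e(x)d(w_ex,w_ey)\leq a\,d(x,y)$ for all $x,y\in K_j$, $j=1,\dots,N$. A function $f:(X,d)\to\mathbb{R}$ is Dini-continuous if $\int_0^c\frac{\phi(t)}{t}dt<\infty$ for some $c>0$, where $\phi(t):=\sup\{|f(x)-f(y)|:d(x,y)\le t,\ x,y\in X\}$ is its modulus of uniform continuity. Let $\Sigma:=E^{\mathbb{Z}}$. For $m\le n$ the cylinder $_m[e_m,\dots,e_n]:=\{\sigma\in\Sigma:\sigma_j=e_j,\ m\le j\le n\}$. For an integer $m\le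 1$, $\mathcal{A}_m$ is the $\sigma$-algebra generated by the cylinders $_m[e_m,\dots,e_n]$, $n\ge m$. For $x\in K$, $P^m_x$ is the probability measure on $(\Sigma,\mathcal{A}_m)$ with $P^m_x(_m[e_m,\dots,e_n])=p_{e_m}(x)\,p_{e_{m+1}}(w_{e_m}x)\cdots p_{e_n}(w_{e_{n-1}}\circ\cdots\circ w_{e_m}x)$. For fixed $x_i\in K_i$, $P^m_{x_1\dots x_N}:=\int P^m_y\,d\big(\frac1N\sum_{i=1}^N\delta_{x_i}\big)(y)=\frac1N\sum_{i=1}^N P^m_{x_i}$. *)

theory Defs
  imports "HOL-Analysis.Analysis"
begin

text \<open>Contractive Markov system. The complete metric space (K,d) is the type 'a of class
complete_space (K = UNIV, d = dist), the vertices are 1..N, the edge set is E :: 'e set.\<close>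

definition cms ::
  "nat \<Rightarrow> 'e set \<Rightarrow> ('e \<Rightarrow> nat) \<Rightarrow> ('e \<Rightarrow> nat) \<Rightarrow> (nat \<Rightarrow> 'a::complete_space set)
   \<Rightarrow> ('e \<Rightarrow> 'a \<Rightarrow> 'a) \<Rightarrow> ('e \<Rightarrow> 'a \<Rightarrow> real) \<Rightarrow> real \<Rightarrow> bool" where
  "cms N E i t K w p a \<longleftrightarrow>
     finite E \<and>
     (\<forall>e\<in>E. i e \<in> {1..N} \<and> t e \<in> {1..N}) \<and>
     (\<forall>j\<in>{1..N}. K j \<noteq> {} \<and> K j \<in> sets borel) \<and>
     (\<forall>j\<in>{1..N}. \<forall>k\<in>{1..N}. j \<noteq> k \<longrightarrow> K j \<inter> K k = {}) \<and>
     (\<Union>j\<in>{1..N}. K j) = UNIV \<and>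
     (\<forall>e\<in>E. w e \<in> borel_measurable borel \<and> w e ` K (i e) \<subseteq> K (t e)) \<and>
     (\<forall>e\<in>E. p e \<in> borel_measurable borel \<and> (\<forall>x. p e x \<ge> 0) \<and>
              (\<forall>x. x \<notin> K (i e) \<longrightarrow> p e x = 0)) \<and>
     (\<forall>x. (\<Sum>e\<in>E. p e x) = 1) \<and>
     0 < a \<and> a < 1 \<and>
     (\<forall>j\<in>{1..N}. \<forall>x\<in>K j. \<forall>y\<in>K j.
        (\<Sum>e\<in>E. p e x * dist (w e x) (w e y)) \<le> a * dist x y)"

text \<open>Modulus of uniform continuity of f on S (values in extended nonnegative reals,
so that an infinite supremum is allowed) and Dini continuity of f restricted to S.\<close>

definition modulus :: "'a::metric_space set \<Rightarrow> ('a \<Rightarrow> real) \<Rightarrow> real \<Rightarrow> ennreal" where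
  "modulus S f r = (SUP xy \<in> {(x, y). x \<in> S \<and> y \<in> S \<and> dist x y \<le> r}.
                       ennreal \<bar>f (fst xy) - f (snd xy)\<bar>)"

definition dini_continuous_on :: "'a::metric_space set \<Rightarrow> ('a \<Rightarrow> real) \<Rightarrow> bool" where
  "dini_continuous_on S f \<longleftrightarrow>
     (\<exists>c>0. (\<integral>\<^sup>+ r \<in> {0<..c}. modulus S f r / ennreal r \<partial>lborel) < \<infinity>)"

text \<open>Sequence space Sigma = E^Z, cylinders starting at position m, sigma-algebra A_m.
A cylinder m[e_m,...,e_n] is given by the nonempty list [e_m,...,e_n].\<close>

definition Sig :: "'e set \<Rightarrow> (int \<Rightarrow> 'e) set" where
  "Sig E = {\<sigma>. \<forall>j. \<sigma> j \<in> E}"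

definition cyl :: "'e set \<Rightarrow> int \<Rightarrow> 'e list \<Rightarrow> (int \<Rightarrow> 'e) set" where
  "cyl E m es = {\<sigma> \<in> Sig E. \<forall>k < length es. \<sigma> (m + int k) = es ! k}"

definition Am :: "'e set \<Rightarrow> int \<Rightarrow> (int \<Rightarrow> 'e) measure" where
  "Am E m = sigma (Sig E) {cyl E m es | es. es \<noteq> [] \<and> set es \<subseteq> E}"

fun cylprob :: "('e \<Rightarrow> 'a \<Rightarrow> 'a) \<Rightarrow> ('e \<Rightarrow> 'a \<Rightarrow> real) \<Rightarrow> 'a \<Rightarrow> 'e list \<Rightarrow> real" where
  "cylprob w p x [] = 1"
| "cylprob w p x (e # es) = p e x * cylprob w p (w e x) es"

definition is_Pm :: "'e set \<Rightarrow> ('e \<Rightarrow> 'a \<Rightarrow> 'a) \<Rightarrow> ('e \<Rightarrow> 'a \<Rightarrow> real) \<Rightarrow> int \<Rightarrow> 'a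
                      \<Rightarrow> (int \<Rightarrow> 'e) measure \<Rightarrow> bool" where
  "is_Pm E w p m x M \<longleftrightarrow>
     sets M = sets (Am E m) \<and> emeasure M (space M) = 1 \<and>
     (\<forall>es. es \<noteq> [] \<and> set es \<subseteq> E \<longrightarrow> emeasure M (cyl E m es) = ennreal (cylprob w p x es))"

definition Pm :: "'e set \<Rightarrow> ('e \<Rightarrow> 'a \<Rightarrow> 'a) \<Rightarrow> ('e \<Rightarrow> 'a \<Rightarrow> real) \<Rightarrow> int \<Rightarrow> 'a
                  \<Rightarrow> (int \<Rightarrow> 'e) measure" where
  "Pm E w p m x = (SOME M. is_Pm E w p m x M)"

definition Pm_mix :: "nat \<Rightarrow> 'e set \<Rightarrow> ('e \<Rightarrow> 'a \<Rightarrow> 'a) \<Rightarrow> ('e \<Rightarrow> 'a \<Rightarrow> real) \<Rightarrow> int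
                      \<Rightarrow> (nat \<Rightarrow> 'a) \<Rightarrow> (int \<Rightarrow> 'e) measure" where
  "Pm_mix N E w p m xs = measure_of (Sig E) (sets (Am E m))
      (\<lambda>A. (\<Sum>j = 1..N. emeasure (Pm E w p m (xs j)) A) / of_nat N)"

end

theory Submission
  imports Defs "HOL-Probability.Probability"
begin

text \<open>Fix x and choose x_j in the same piece K_j as x. A P^m_{x_1...x_N}-null set is
P^m_{x_j}-null, so it suffices to show that every P^m_y-null set is P^m_x-null when x and y lie
in the same piece. Under the maps w_e the orbits of x and y along a random path are contracted
on average: the expected distance after n steps is at most a^n d(x,y). With b = sqrt a,
Markov's inequality shows that the set G of paths along which the two orbits stay within
R b^k of each other at every step k has P^m_x-measure at least 1 - d(x,y) / (R (1 - b)).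
On every cylinder, the P^m_x-mass of its part inside G is at most the P^m_y-mass times
prod_k (1 + Phi(R b^k) / delta), where Phi sums the moduli of continuity of the p_e; Dini
continuity makes sum_k Phi(R b^k) finite, so this factor is a finite constant C_R. Approximating
an arbitrary set of A_m by cylinders (outer measure), a P^m_y-null set A satisfies
P^m_x(A \<inter> G) = 0 and thus P^m_x(A) \<le> d(x,y) / (R (1 - b)) for every R > 0.\<close>

section \<open>Paths, prefixes and prefix sets\<close>

definition path_prefix :: "int \<Rightarrow> nat \<Rightarrow> (int \<Rightarrow> 'e) \<Rightarrow> 'e list" where
  "path_prefix m n \<sigma> = map (\<lambda>k. \<sigma> (m + int k)) [0..<n]"

definition words :: "'e set \<Rightarrow> nat \<Rightarrow> 'e list set" where
  "words E n = {es. set es \<subseteq> E \<and> length es = n}"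

definition prefix_set :: "'e set \<Rightarrow> int \<Rightarrow> nat \<Rightarrow> 'e list set \<Rightarrow> (int \<Rightarrow> 'e) set" where
  "prefix_set E m n L = {\<sigma> \<in> Sig E. path_prefix m n \<sigma> \<in> L}"

definition prefix_sets :: "'e set \<Rightarrow> int \<Rightarrow> (int \<Rightarrow> 'e) set set" where
  "prefix_sets E m = {prefix_set E m n L | n L. True}"

lemma take_path_prefix: "k \<le> n \<Longrightarrow> take k (path_prefix m n \<sigma>) = path_prefix m k \<sigma>"
  by (simp add: path_prefix_def take_map)

lemma path_prefix_eq_iff:
  "path_prefix m n \<sigma> = es \<longleftrightarrow> length es = n \<and> (\<forall>k<n. \<sigma> (m + int k) = es ! k)"
  unfolding path_prefix_def list_eq_iff_nth_eq by auto

lemma path_prefix_in_words: "\<sigma> \<in> Sig E \<Longrightarrow> path_prefix m n \<sigma> \<in> words E n"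
  by (auto simp: words_def path_prefix_def Sig_def)

lemma finite_words: "finite E \<Longrightarrow> finite (words E n)"
  unfolding words_def by (rule finite_lists_length_eq)

lemma words_0: "words E 0 = {[]}"
  by (auto simp: words_def)

lemma sum_words_Suc:
  assumes "finite E"
  shows "(\<Sum>l\<in>words E (Suc n). f l) = (\<Sum>e\<in>E. \<Sum>l\<in>words E n. f (e # l))"
proof -
  have "words E (Suc n) = (\<lambda>(e, l). e # l) ` (E \<times> words E n)"
    by (auto simp: words_def image_iff length_Suc_conv)
  moreover have "inj_on (\<lambda>(e, l). e # l) (E \<times> words E n)"
    by (auto simp: inj_on_def)
  ultimately show ?thesis
    by (simp add: sum.reindex sum.cartesian_product case_prod_unfold)
qed

lemma cylprob_nonneg: "\<forall>e\<in>E. \<forall>y. 0 \<le> p e y \<Longrightarrow> set es \<subseteq> E \<Longrightarrow> 0 \<le> cylprob w p x es"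
  by (induction es arbitrary: x) auto

lemma cyl_eq_prefix_set: "cyl E m es = prefix_set E m (length es) {es}"
  by (simp add: cyl_def prefix_set_def path_prefix_eq_iff)

lemma prefix_set_extend: "n \<le> k \<Longrightarrow> prefix_set E m n L = prefix_set E m k {l. take n l \<in> L}"
  by (auto simp: prefix_set_def take_path_prefix)

lemma prefix_set_eq_UN_singleton:
  "prefix_set E m n L = (\<Union>es\<in>L \<inter> words E n. prefix_set E m n {es})"
  using path_prefix_in_words by (fastforce simp: prefix_set_def)

lemma space_Am: "space (Am E m) = Sig E"
  unfolding Am_def by (rule space_measure_of) (auto simp: cyl_def)

lemma sets_Am: "sets (Am E m) = sigma_sets (Sig E) {cyl E m es | es. es \<noteq> [] \<and> set es \<subseteq> E}"
  unfolding Am_def by (rule sets_measure_of) (auto simp: cyl_def)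

lemma cyl_in_Am: "es \<noteq> [] \<Longrightarrow> set es \<subseteq> E \<Longrightarrow> cyl E m es \<in> sets (Am E m)"
  unfolding sets_Am by (rule sigma_sets.Basic) blast

lemma prefix_set_singleton_in_Am:
  assumes "es \<in> words E n"
  shows "prefix_set E m n {es} \<in> sets (Am E m)"
proof (cases "n = 0")
  case True
  then have "prefix_set E m n {es} = space (Am E m)"
    using assms by (simp add: space_Am words_def prefix_set_def path_prefix_def)
  then show ?thesis by simp
next
  case False
  then show ?thesis
    using assms cyl_in_Am[of es E m] by (auto simp: cyl_eq_prefix_set words_def)
qed

lemma prefix_set_in_Am: "finite E \<Longrightarrow> prefix_set E m n L \<in> sets (Am E m)"
  by (subst prefix_set_eq_UN_singleton)
     (auto intro!: sets.finite_UN prefix_set_singleton_in_Am finite_words)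

lemma ring_of_sets_prefix_sets: "ring_of_sets (Sig E) (prefix_sets E m)"
  unfolding ring_of_sets_iff
proof (intro conjI ballI)
  show "prefix_sets E m \<subseteq> Pow (Sig E)"
    by (auto simp: prefix_sets_def prefix_set_def)
  show "{} \<in> prefix_sets E m"
    unfolding prefix_sets_def by (intro CollectI exI[of _ 0] exI[of _ "{}"]) (simp add: prefix_set_def)
next
  fix A B assume "A \<in> prefix_sets E m" "B \<in> prefix_sets E m"
  then obtain n L n' L' where AB: "A = prefix_set E m n L" "B = prefix_set E m n' L'"
    by (auto simp: prefix_sets_def)
  define k where "k = max n n'"
  have A: "A = prefix_set E m k {l. take n l \<in> L}"
    and B: "B = prefix_set E m k {l. take n' l \<in> L'}"
    unfolding AB by (simp_all add: prefix_set_extend k_def)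
  have "A \<union> B = prefix_set E m k ({l. take n l \<in> L} \<union> {l. take n' l \<in> L'})"
    and "A - B = prefix_set E m k ({l. take n l \<in> L} - {l. take n' l \<in> L'})"
    unfolding A B by (auto simp: prefix_set_def)
  then show "A \<union> B \<in> prefix_sets E m" "A - B \<in> prefix_sets E m"
    by (auto simp: prefix_sets_def)
qed

lemma Sig_in_prefix_sets: "Sig E \<in> prefix_sets E m"
  unfolding prefix_sets_def by (intro CollectI exI[of _ 0] exI[of _ UNIV]) (simp add: prefix_set_def)

lemma sets_Am_eq_prefix_sets:
  assumes fin: "finite E"
  shows "sets (Am E m) = sigma_sets (Sig E) (prefix_sets E m)"
proof
  show "sigma_sets (Sig E) (prefix_sets E m) \<subseteq> sets (Am E m)"
    using sets.sigma_sets_subset[of "prefix_sets E m" "Am E m"] prefix_set_in_Am[OF fin]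
    by (auto simp: prefix_sets_def space_Am)
  have "{cyl E m es | es. es \<noteq> [] \<and> set es \<subseteq> E} \<subseteq> prefix_sets E m"
    by (auto simp: cyl_eq_prefix_set prefix_sets_def)
  then show "sets (Am E m) \<subseteq> sigma_sets (Sig E) (prefix_sets E m)"
    unfolding sets_Am by (rule sigma_sets_mono')
qed


section \<open>Existence of the measures P^m_x\<close>

text \<open>Pm is defined by choice, so a witness is needed: the law of the edge sequence of the
chain driven by i.i.d. uniform numbers, where from state y the number u selects the edge e
whose interval contains u in the partition of [0,1] into consecutive intervals of lengths
p_e(y).\<close>

fun select_edge :: "('e \<Rightarrow> real) \<Rightarrow> 'e \<Rightarrow> 'e list \<Rightarrow> real \<Rightarrow> real \<Rightarrow> 'e" where
  "select_edge q d [] s u = d"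
| "select_edge q d (e # es) s u = (if u < s + q e then e else select_edge q d es (s + q e) u)"

lemma measurable_select_edge: "Measurable.pred borel (\<lambda>u. select_edge q d l s u = e)"
proof (induction l arbitrary: s)
  case (Cons e' es)
  then show ?case by simp measurable
qed simp

lemma select_edge_in: "d \<in> E \<Longrightarrow> set l \<subseteq> E \<Longrightarrow> select_edge q d l s u \<in> E"
  by (induction l arbitrary: s) auto

lemma select_edge_eqI:
  assumes "e \<in> set l" "\<forall>e'\<in>set l. 0 \<le> q e'"
    and "s + sum_list (map q (takeWhile (\<lambda>e'. e' \<noteq> e) l)) \<le> u"
    and "u < s + sum_list (map q (takeWhile (\<lambda>e'. e' \<noteq> e) l)) + q e"
  shows "select_edge q d l s u = e"
  using assms
proof (induction l arbitrary: s)
  case (Cons e' es)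
  show ?case
  proof (cases "e' = e")
    case False
    have "0 \<le> sum_list (map q (takeWhile (\<lambda>e'. e' \<noteq> e) es))"
      using Cons.prems(2) by (intro sum_list_nonneg) (auto dest: set_takeWhileD)
    then show ?thesis
      using False Cons.prems Cons.IH[of "s + q e'"] by (auto simp: add.assoc)
  qed (use Cons.prems in simp)
qed simp

abbreviation unit_uniform :: "real measure" where
  "unit_uniform \<equiv> uniform_measure lborel {0..1}"

interpretation unit_uniform: prob_space unit_uniform
  by (rule prob_space_uniform_measure) auto

interpretation uniform_stream: prob_space "stream_space unit_uniform"
  by (rule unit_uniform.prob_space_stream_space)

lemma space_uniform_stream [simp]: "space (stream_space unit_uniform) = UNIV"
  by (simp add: space_stream_space streams_UNIV)

lemma emeasure_select_edge:
  assumes l: "distinct l" "set l = E" and q: "\<forall>e\<in>E. 0 \<le> q e" "(\<Sum>e\<in>E. q e) = 1"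
    and e: "e \<in> E"
  shows "emeasure unit_uniform {u. select_edge q d l 0 u = e} = ennreal (q e)"
proof -
  \<comment> \<open>Each preimage contains an interval of length q e; the preimages are disjoint and
      have total mass at most 1 = (\<Sum>e\<in>E. q e), so each has mass exactly q e.\<close>
  let ?S = "\<lambda>e. {u. select_edge q d l 0 u = e}"
  have S_sets: "?S e \<in> sets unit_uniform" for e
    using measurable_select_edge[of q d l 0 e] by (simp add: pred_def)
  have lower: "q e \<le> measure unit_uniform (?S e)" if eE: "e \<in> E" for e
  proof -
    define c where "c = sum_list (map q (takeWhile (\<lambda>e'. e' \<noteq> e) l))"
    obtain xs ys where split: "l = xs @ e # ys" "e \<notin> set xs"
      using split_list_first[of e l] eE l(2) by auto
    then have c: "c = sum_list (map q xs)"
      unfolding c_def split(1) using split(2) by (subst takeWhile_append2) auto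
    have "1 = sum_list (map q l)"
      using l q(2) by (simp add: sum_list_distinct_conv_sum_set)
    also have "\<dots> = c + q e + sum_list (map q ys)"
      by (simp add: split c)
    moreover have "0 \<le> c" "0 \<le> sum_list (map q ys)"
      using q(1) l(2) split(1) unfolding c by (auto intro!: sum_list_nonneg)
    ultimately have "0 \<le> c" "c + q e \<le> 1"
      by linarith+
    then have "{0..1} \<inter> {c..<c + q e} = {c..<c + q e}"
      by auto
    then have "q e = measure unit_uniform {c..<c + q e}"
      using q(1) eE by (simp add: measure_def divide_ennreal_def)
    also have "\<dots> \<le> measure unit_uniform (?S e)"
      using select_edge_eqI[of e l q 0] eE q(1) l(2) S_sets
      by (intro unit_uniform.finite_measure_mono) (auto simp: c_def)
    finally show ?thesis .
  qed
  have "(\<Sum>e\<in>E. measure unit_uniform (?S e)) = measure unit_uniform (\<Union>e\<in>E. ?S e)"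
    using l(2) S_sets
    by (intro unit_uniform.finite_measure_finite_Union[symmetric])
       (auto simp: disjoint_family_on_def)
  also have "\<dots> \<le> (\<Sum>e\<in>E. q e)"
    using q(2) by simp
  finally have "(\<Sum>e\<in>E. measure unit_uniform (?S e)) \<le> (\<Sum>e\<in>E. q e)" .
  moreover have "(\<Sum>e\<in>E. q e) \<le> (\<Sum>e\<in>E. measure unit_uniform (?S e))"
    using lower by (rule sum_mono)
  ultimately have "(\<Sum>e\<in>E. q e) = (\<Sum>e\<in>E. measure unit_uniform (?S e))"
    by (rule antisym[rotated])
  then have "q e = measure unit_uniform (?S e)"
    using lower e by (rule sum_mono_inv) (use l(2) in auto)
  then show ?thesis
    by (simp add: unit_uniform.emeasure_eq_measure)
qed

primcorec edge_stream :: "('a \<Rightarrow> real \<Rightarrow> 'e) \<Rightarrow> ('e \<Rightarrow> 'a \<Rightarrow> 'a) \<Rightarrow> 'a \<Rightarrow> real stream \<Rightarrow> 'e stream" where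
  "edge_stream F w x \<omega> = F x (shd \<omega>) ## edge_stream F w (w (F x (shd \<omega>)) x) (stl \<omega>)"

lemma edge_stream_in: "(\<And>x u. F x u \<in> E) \<Longrightarrow> edge_stream F w x \<omega> !! k \<in> E"
  by (induction k arbitrary: x \<omega>) auto

lemma emeasure_stake_edge_stream:
  assumes F: "\<And>y e. {u. F y u = e} \<in> sets borel"
    "\<And>y e. e \<in> E \<Longrightarrow> emeasure unit_uniform {u. F y u = e} = ennreal (p e y)"
    and p: "\<forall>e\<in>E. \<forall>y. 0 \<le> p e y" and es: "set es \<subseteq> E"
  shows "{\<omega>. stake (length es) (edge_stream F w x \<omega>) = es} \<in> sets (stream_space unit_uniform) \<and>
    emeasure (stream_space unit_uniform) {\<omega>. stake (length es) (edge_stream F w x \<omega>) = es} =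
      ennreal (cylprob w p x es)"
  using es
proof (induction es arbitrary: x)
  case Nil
  then show ?case
    using uniform_stream.emeasure_space_1 sets.top[of "stream_space unit_uniform"] by simp
next
  case (Cons e es)
  let ?S = "stream_space unit_uniform"
  define Y where "Y = {\<omega>. stake (length es) (edge_stream F w (w e x) \<omega>) = es}"
  have "set es \<subseteq> E"
    using Cons.prems by simp
  then have Y: "Y \<in> sets ?S" "emeasure ?S Y = ennreal (cylprob w p (w e x) es)"
    unfolding Y_def using Cons.IH by simp_all
  have head: "shd -` {u. F x u = e} \<in> sets ?S"
    using measurable_sets[OF measurable_shd, of "{u. F x u = e}" unit_uniform] F(1) by simp
  have tail: "stl -` Y \<in> sets ?S"
    using measurable_sets[OF measurable_stl Y(1)] by simp
  have split: "{\<omega>. stake (length (e # es)) (edge_stream F w x \<omega>) = e # es} =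
      shd -` {u. F x u = e} \<inter> stl -` Y"
    by (auto simp: Y_def)
  have "emeasure ?S (shd -` {u. F x u = e} \<inter> stl -` Y) =
      (\<integral>\<^sup>+u. emeasure ?S {\<omega>. u ## \<omega> \<in> shd -` {u. F x u = e} \<inter> stl -` Y} \<partial>unit_uniform)"
    using unit_uniform.emeasure_stream_space[of "shd -` {u. F x u = e} \<inter> stl -` Y"] head tail
    by simp
  also have "\<dots> = (\<integral>\<^sup>+u. emeasure ?S Y * indicator {u. F x u = e} u \<partial>unit_uniform)"
    by (intro nn_integral_cong) (simp split: split_indicator)
  also have "\<dots> = emeasure ?S Y * ennreal (p e x)"
    using F Cons.prems by (subst nn_integral_cmult_indicator) auto
  also have "\<dots> = ennreal (cylprob w p x (e # es))"
    using Y(2) Cons.prems p cylprob_nonneg[of E p es w "w e x"]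
    by (simp add: ennreal_mult'[symmetric] mult.commute)
  finally show ?case
    using split head tail by auto
qed

definition stream_to_path :: "int \<Rightarrow> 'e \<Rightarrow> 'e stream \<Rightarrow> (int \<Rightarrow> 'e)" where
  "stream_to_path m e0 s = (\<lambda>j. if m \<le> j then s !! nat (j - m) else e0)"

lemma path_prefix_stream_to_path: "path_prefix m n (stream_to_path m e0 s) = stake n s"
  unfolding path_prefix_eq_iff by (auto simp: stream_to_path_def stake_nth)

lemma exists_is_Pm:
  assumes fin: "finite E" and p: "\<forall>e\<in>E. \<forall>y. 0 \<le> p e y" "\<forall>y. (\<Sum>e\<in>E. p e y) = 1"
  shows "\<exists>M. is_Pm E w p m x M"
proof -
  obtain l where l: "set l = E" "distinct l"
    using finite_distinct_list[OF fin] by blast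
  obtain e0 where e0: "e0 \<in> E"
    using p(2) by fastforce
  define F where "F y u = select_edge (\<lambda>e. p e y) e0 l 0 u" for y u
  have F_sets: "{u. F y u = e} \<in> sets borel" for y e
    using measurable_select_edge unfolding F_def pred_def by simp
  have F_emeasure: "emeasure unit_uniform {u. F y u = e} = ennreal (p e y)" if "e \<in> E" for y e
    unfolding F_def using l p that by (intro emeasure_select_edge) auto
  have F_in: "F y u \<in> E" for y u
    unfolding F_def using e0 l by (intro select_edge_in) auto
  define f where "f \<omega> = stream_to_path m e0 (edge_stream F w x \<omega>)" for \<omega>
  have f_Sig: "f \<omega> \<in> Sig E" for \<omega>
    unfolding f_def Sig_def stream_to_path_def using edge_stream_in[OF F_in] e0 by auto
  have f_vimage_cyl: "f -` cyl E m es = {\<omega>. stake (length es) (edge_stream F w x \<omega>) = es}" for es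
    using f_Sig by (auto simp: cyl_eq_prefix_set prefix_set_def f_def path_prefix_stream_to_path)
  note stake_sets = emeasure_stake_edge_stream[OF F_sets F_emeasure p(1)]
  have f_measurable: "f \<in> stream_space unit_uniform \<rightarrow>\<^sub>M Am E m"
    unfolding Am_def
  proof (rule measurable_measure_of)
    fix A assume "A \<in> {cyl E m es | es. es \<noteq> [] \<and> set es \<subseteq> E}"
    then show "f -` A \<inter> space (stream_space unit_uniform) \<in> sets (stream_space unit_uniform)"
      using stake_sets by (auto simp: f_vimage_cyl)
  qed (auto simp: cyl_def f_Sig)
  have "is_Pm E w p m x (distr (stream_space unit_uniform) (Am E m) f)"
    unfolding is_Pm_def
  proof (intro conjI allI impI)
    show "emeasure (distr (stream_space unit_uniform) (Am E m) f)
        (space (distr (stream_space unit_uniform) (Am E m) f)) = 1"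
      using uniform_stream.prob_space_distr[OF f_measurable] by (rule prob_space.emeasure_space_1)
    fix es assume "es \<noteq> [] \<and> set es \<subseteq> E"
    then show "emeasure (distr (stream_space unit_uniform) (Am E m) f) (cyl E m es) =
        ennreal (cylprob w p x es)"
      using stake_sets by (simp add: emeasure_distr[OF f_measurable] cyl_in_Am f_vimage_cyl)
  qed simp
  then show ?thesis ..
qed

lemma space_is_Pm: "is_Pm E w p m x M \<Longrightarrow> space M = Sig E"
  unfolding is_Pm_def using sets_eq_imp_space_eq space_Am by metis

lemma emeasure_prefix_set_singleton:
  assumes M: "is_Pm E w p m x M" and es: "es \<in> words E n"
  shows "emeasure M (prefix_set E m n {es}) = ennreal (cylprob w p x es)"
proof (cases "n = 0")
  case True
  then have "prefix_set E m n {es} = space M" "es = []"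
    using es space_is_Pm[OF M] by (auto simp: words_def prefix_set_def path_prefix_def)
  then show ?thesis
    using M by (simp add: is_Pm_def)
next
  case False
  then show ?thesis
    using M es by (auto simp: is_Pm_def words_def cyl_eq_prefix_set)
qed

lemma emeasure_prefix_set:
  assumes M: "is_Pm E w p m x M" and fin: "finite E"
  shows "emeasure M (prefix_set E m n L) = (\<Sum>es\<in>L \<inter> words E n. ennreal (cylprob w p x es))"
proof -
  have sets_M: "sets M = sets (Am E m)"
    using M by (simp add: is_Pm_def)
  have "(\<Sum>es\<in>L \<inter> words E n. emeasure M (prefix_set E m n {es})) =
      emeasure M (\<Union>es\<in>L \<inter> words E n. prefix_set E m n {es})"
  proof (rule sum_emeasure)
    show "(\<lambda>es. prefix_set E m n {es}) ` (L \<inter> words E n) \<subseteq> sets M"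
      using prefix_set_singleton_in_Am sets_M by blast
    show "disjoint_family_on (\<lambda>es. prefix_set E m n {es}) (L \<inter> words E n)"
      by (auto simp: disjoint_family_on_def prefix_set_def)
  qed (simp add: fin finite_words)
  then have "emeasure M (prefix_set E m n L) =
      (\<Sum>es\<in>L \<inter> words E n. emeasure M (prefix_set E m n {es}))"
    by (simp flip: prefix_set_eq_UN_singleton)
  also have "\<dots> = (\<Sum>es\<in>L \<inter> words E n. ennreal (cylprob w p x es))"
    using emeasure_prefix_set_singleton[OF M] by simp
  finally show ?thesis .
qed

section \<open>Outer measure of a generating ring\<close>

lemma emeasure_eq_outer_measure:
  assumes R: "ring_of_sets \<Omega> R" "\<Omega> \<in> R" and sets_Q: "sets Q = sigma_sets \<Omega> R"
    and fin: "emeasure Q \<Omega> \<noteq> \<infinity>" and A: "A \<in> sets Q"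
  shows "emeasure Q A = outer_measure R (emeasure Q) A"
proof -
  \<comment> \<open>Caratheodory's construction makes the outer measure a measure on sigma_sets \<Omega> R
      that agrees with Q on R; by uniqueness of the extension it is Q.\<close>
  interpret R: ring_of_sets \<Omega> R by (rule R(1))
  let ?O = "outer_measure R (emeasure Q)"
  have pos: "positive R (emeasure Q)"
    by (simp add: positive_def)
  have "R \<subseteq> sets Q"
    using sets_Q by auto
  then have ca: "countably_additive R (emeasure Q)"
    using emeasure_countably_additive[of Q] unfolding countably_additive_def by blast
  have inc: "increasing R (emeasure Q)"
    using ca pos by (metis R.additive_increasing R.countably_additive_additive)
  define L where "L = lambda_system \<Omega> (Pow \<Omega>) ?O"
  have L: "measure_space \<Omega> L ?O"
    unfolding L_def
    by (rule sigma_algebra.caratheodory_lemma[OF sigma_algebra_Pow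
          R.outer_measure_space_outer_measure[OF pos inc]])
  have "R \<subseteq> L"
    unfolding L_def using ca pos inc
    by (metis R.countably_additive_additive R.algebra_subset_lambda_system)
  then have "sigma_sets \<Omega> R \<subseteq> L"
    using L by (intro sigma_algebra.sigma_sets_subset) (auto simp: measure_space_def)
  then have "measure_space \<Omega> (sigma_sets \<Omega> R) ?O"
    using L R.space_closed by (intro measure_down[OF L] sigma_algebra_sigma_sets)
  define Q' where "Q' = measure_of \<Omega> (sigma_sets \<Omega> R) ?O"
  have sets_Q': "sets Q' = sigma_sets \<Omega> R"
  proof -
    have "sigma_sets \<Omega> R \<subseteq> Pow \<Omega>"
      using sigma_sets_into_sp[OF R.space_closed] by blast
    then show ?thesis
      unfolding Q'_def by (simp add: sigma_sets_sigma_sets_eq R.space_closed)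
  qed
  have emeasure_Q': "emeasure Q' B = ?O B" if "B \<in> sigma_sets \<Omega> R" for B
    unfolding Q'_def using \<open>measure_space \<Omega> (sigma_sets \<Omega> R) ?O\<close> that
    by (intro emeasure_measure_of_sigma) (auto simp: measure_space_def)
  have "Q = Q'"
  proof (rule measure_eqI_generator_eq[of R \<Omega> _ _ "\<lambda>_. \<Omega>"])
    show "Int_stable R"
      unfolding Int_stable_def using R.Int by blast
    show "emeasure Q X = emeasure Q' X" if "X \<in> R" for X
      using that emeasure_Q' R.outer_measure_agrees[OF pos ca] by auto
  qed (use R(2) fin R.space_closed sets_Q sets_Q' in auto)
  then show ?thesis
    using emeasure_Q' A sets_Q by simp
qed

lemma null_set_Int_of_dominated_on_ring:
  assumes R: "ring_of_sets \<Omega> R" "\<Omega> \<in> R"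
    and sets_P: "sets P = sigma_sets \<Omega> R" and sets_Q: "sets Q = sigma_sets \<Omega> R"
    and finite_Q: "emeasure Q \<Omega> \<noteq> \<infinity>" and G: "G \<in> sets P" and C: "0 < C"
    and dominated: "\<And>B. B \<in> R \<Longrightarrow> emeasure P (B \<inter> G) \<le> ennreal C * emeasure Q B"
    and A: "A \<in> null_sets Q"
  shows "emeasure P (A \<inter> G) = 0"
proof -
  interpret R: ring_of_sets \<Omega> R by (rule R(1))
  have R_sets: "R \<subseteq> sets P"
    using sets_P by auto
  have small: "emeasure P (A \<inter> G) \<le> ennreal \<epsilon>" if "0 < \<epsilon>" for \<epsilon>
  proof -
    have "outer_measure R (emeasure Q) A = 0"
      using emeasure_eq_outer_measure[OF R sets_Q finite_Q null_setsD2[OF A]] null_setsD1[OF A]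
      by simp
    then have "outer_measure R (emeasure Q) A < ennreal (\<epsilon> / C)"
      using C \<open>0 < \<epsilon>\<close> by simp
    then obtain B where B: "range B \<subseteq> R" "A \<subseteq> (\<Union>k. B k)"
      "(\<Sum>k. emeasure Q (B k)) < ennreal (\<epsilon> / C)"
      by (blast dest: R.outer_measure_close)
    have B_sets: "B k \<inter> G \<in> sets P" for k
      using B(1) R_sets G by (intro sets.Int) auto
    have "emeasure P (A \<inter> G) \<le> emeasure P (\<Union>k. B k \<inter> G)"
    proof (rule emeasure_mono)
      show "(\<Union>k. B k \<inter> G) \<in> sets P"
        using B_sets by (intro sets.countable_UN) auto
    qed (use B(2) in blast)
    also have "\<dots> \<le> (\<Sum>k. emeasure P (B k \<inter> G))"
      using B_sets by (intro emeasure_subadditive_countably) auto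
    also have "\<dots> \<le> (\<Sum>k. ennreal C * emeasure Q (B k))"
      using B(1) dominated by (intro suminf_le) auto
    also have "\<dots> = ennreal C * (\<Sum>k. emeasure Q (B k))"
      by (rule ennreal_suminf_cmult)
    also have "\<dots> \<le> ennreal C * ennreal (\<epsilon> / C)"
      using B(3) by (intro mult_left_mono) auto
    also have "\<dots> = ennreal \<epsilon>"
      using C \<open>0 < \<epsilon>\<close> by (simp flip: ennreal_mult)
    finally show ?thesis .
  qed
  have "emeasure P (A \<inter> G) \<le> 0"
    by (rule ennreal_le_epsilon) (simp add: small)
  then show ?thesis
    by simp
qed

lemma countably_additive_average:
  assumes "\<And>j. j \<in> J \<Longrightarrow> sets (M j) = S"
  shows "countably_additive S (\<lambda>A. (\<Sum>j\<in>J. emeasure (M j) A) / c)"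
  unfolding countably_additive_def
proof (intro allI impI)
  fix F :: "nat \<Rightarrow> _"
  assume F: "range F \<subseteq> S" "disjoint_family F" "\<Union> (range F) \<in> S"
  have "(\<Sum>k. (\<Sum>j\<in>J. emeasure (M j) (F k)) / c) = (\<Sum>k. \<Sum>j\<in>J. emeasure (M j) (F k)) / c"
    by (simp add: divide_ennreal_def ennreal_suminf_multc)
  also have "(\<Sum>k. \<Sum>j\<in>J. emeasure (M j) (F k)) = (\<Sum>j\<in>J. \<Sum>k. emeasure (M j) (F k))"
    by (rule suminf_sum) (rule summableI)
  also have "\<dots> = (\<Sum>j\<in>J. emeasure (M j) (\<Union> (range F)))"
    using F assms by (intro sum.cong refl suminf_emeasure) auto
  finally show "(\<Sum>k. (\<Sum>j\<in>J. emeasure (M j) (F k)) / c) =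
      (\<Sum>j\<in>J. emeasure (M j) (\<Union> (range F))) / c" .
qed

section \<open>Dini continuity\<close>

lemma summable_geometric_samples_of_dini:
  fixes g :: "real \<Rightarrow> real"
  assumes g: "mono g" "\<And>t. 0 \<le> g t" and c: "c > 0"
    and dini: "(\<integral>\<^sup>+ t \<in> {0<..c}. ennreal (g t) / ennreal t \<partial>lborel) < \<infinity>"
    and R: "R > 0" and b: "0 < b" "b < 1"
  shows "summable (\<lambda>k. g (R * b ^ k))"
proof -
  obtain K0 where K0: "b ^ K0 < c / R"
    using real_arch_pow_inv[of "c / R" b] c R b by auto
  define r where "r k = R * b ^ (K0 + k)" for k
  have r_pos: "0 < r k" for k
    using R b by (simp add: r_def)
  have r_Suc: "r (Suc k) = b * r k" for k
    by (simp add: r_def)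
  have r_Suc_le: "r (Suc k) \<le> r k" for k
    using r_pos[of k] b by (simp add: r_Suc)
  have "r k \<le> R * b ^ K0" for k
    using R b by (simp add: r_def power_add mult_left_le power_le_one)
  then have r_le_c: "r k \<le> c" for k
    using K0 R by (smt (verit) pos_less_divide_eq mult.commute)
  define I where "I k = {r (Suc k)<..c} - {r k<..c}" for k
  have I_eq: "I k = {r (Suc k)<..r k}" for k
    using r_le_c[of k] by (auto simp: I_def)
  define h where "h t = ennreal (g t) / ennreal t" for t
  \<comment> \<open>On the interval (r (k+1), r k], of length (1 - b) r k, the integrand is at least
      g (r (k+1)) / r k.\<close>
  have lower: "ennreal ((1 - b) * g (r (Suc k))) \<le> (\<integral>\<^sup>+ t. h t * indicator (I k) t \<partial>lborel)" for k
  proof -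
    have "ennreal ((1 - b) * g (r (Suc k))) = ennreal (g (r (Suc k)) / r k) * ennreal (r k - r (Suc k))"
    proof -
      have eq: "(1 - b) * g (r (Suc k)) = g (r (Suc k)) / r k * (r k - r (Suc k))"
        using r_pos[of k] by (simp add: r_Suc field_simps)
      have "0 \<le> g (r (Suc k)) / r k" "0 \<le> r k - r (Suc k)"
        using r_pos[of k] b g(2) by (simp_all add: r_Suc mult_left_le_one_le)
      then show ?thesis
        unfolding eq by (rule ennreal_mult)
    qed
    also have "\<dots> = (\<integral>\<^sup>+ t. ennreal (g (r (Suc k)) / r k) * indicator (I k) t \<partial>lborel)"
      using r_pos[of k] b
      by (simp add: nn_integral_cmult_indicator I_eq r_Suc mult_left_le_one_le)
    also have "\<dots> \<le> (\<integral>\<^sup>+ t. h t * indicator (I k) t \<partial>lborel)"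
    proof (intro nn_integral_mono)
      fix t
      show "ennreal (g (r (Suc k)) / r k) * indicator (I k) t \<le> h t * indicator (I k) t"
      proof (cases "t \<in> I k")
        case True
        then have t: "r (Suc k) < t" "t \<le> r k"
          by (auto simp: I_eq)
        moreover have "0 < t"
          using r_pos[of "Suc k"] t by linarith
        moreover have "g (r (Suc k)) \<le> g t"
          using g(1) t(1) by (simp add: monoD)
        ultimately have "g (r (Suc k)) / r k \<le> g t / t"
          using g(2) by (meson frac_le order.trans divide_left_mono order_less_imp_le)
        then show ?thesis
          using True \<open>0 < t\<close> g(2) by (simp add: h_def divide_ennreal ennreal_leI)
      qed simp
    qed
    finally show ?thesis .
  qed
  have "(\<Sum>k. ennreal ((1 - b) * g (r (Suc k)))) \<le> (\<Sum>k. \<integral>\<^sup>+ t. h t * indicator (I k) t \<partial>lborel)"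
    using lower by (intro suminf_le) auto
  also have "\<dots> = (\<integral>\<^sup>+ t. (\<Sum>k. h t * indicator (I k) t) \<partial>lborel)"
    using borel_measurable_mono[OF g(1)]
    by (intro nn_integral_suminf[symmetric]) (simp add: h_def I_eq)
  also have "\<dots> = (\<integral>\<^sup>+ t. h t * indicator (\<Union>k. I k) t \<partial>lborel)"
  proof -
    have "disjoint_family I"
      unfolding I_def by (rule disjoint_family_Suc) (auto intro: le_less_trans[OF r_Suc_le])
    then show ?thesis
      by (simp add: ennreal_suminf_cmult suminf_indicator)
  qed
  also have "\<dots> \<le> (\<integral>\<^sup>+ t \<in> {0<..c}. h t \<partial>lborel)"
    by (intro nn_integral_mono mult_left_mono)
       (auto simp: I_def split: split_indicator intro: less_trans[OF r_pos])
  also have "\<dots> < \<infinity>"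
    using dini by (simp add: h_def)
  finally have "summable (\<lambda>k. (1 - b) * g (r (Suc k)))"
    using g(2) b by (intro summable_suminf_not_top) auto
  then have "summable (\<lambda>k. g (r (Suc k)))"
    using b by (simp only: summable_cmult_iff) simp
  then have "summable (\<lambda>k. g (R * b ^ (k + Suc K0)))"
    by (simp add: r_def algebra_simps)
  then show ?thesis
    by (rule summable_iff_shift[THEN iffD1])
qed

lemma modulus_mono: "r \<le> r' \<Longrightarrow> modulus S f r \<le> modulus S f r'"
  unfolding modulus_def by (rule SUP_subset_mono) auto

lemma modulus_upper: "u \<in> S \<Longrightarrow> v \<in> S \<Longrightarrow> dist u v \<le> r \<Longrightarrow> ennreal \<bar>f u - f v\<bar> \<le> modulus S f r"
  unfolding modulus_def by (rule SUP_upper2[of "(u, v)"]) auto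

lemma modulus_le_1: "(\<And>u. 0 \<le> f u \<and> f u \<le> 1) \<Longrightarrow> modulus S f r \<le> 1"
  unfolding modulus_def
proof (rule SUP_least)
  fix uv :: "'a \<times> 'a"
  assume "\<And>u. 0 \<le> f u \<and> f u \<le> 1"
  then have "\<bar>f (fst uv) - f (snd uv)\<bar> \<le> 1"
    by (smt (verit))
  then show "ennreal \<bar>f (fst uv) - f (snd uv)\<bar> \<le> 1"
    by (simp add: ennreal_le_1)
qed

lemma summable_modulus_geometric_samples:
  assumes f: "\<And>u. 0 \<le> f u \<and> f u \<le> 1" and "dini_continuous_on S f"
    and R: "R > 0" and b: "0 < b" "b < 1"
  shows "summable (\<lambda>k. enn2real (modulus S f (R * b ^ k)))"
proof -
  have le_1: "modulus S f r \<le> 1" for r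
    using f by (rule modulus_le_1)
  have finite_modulus: "modulus S f r < \<top>" for r
    using le_1[of r] by (rule le_less_trans) simp
  then have finite: "modulus S f r = ennreal (enn2real (modulus S f r))" for r
    by (simp add: less_top[symmetric])
  obtain c where "c > 0" "(\<integral>\<^sup>+ t \<in> {0<..c}. modulus S f t / ennreal t \<partial>lborel) < \<infinity>"
    using \<open>dini_continuous_on S f\<close> by (auto simp: dini_continuous_on_def)
  moreover have "mono (\<lambda>r. enn2real (modulus S f r))"
    using finite_modulus by (intro monoI enn2real_mono modulus_mono) auto
  ultimately show ?thesis
    using R b by (intro summable_geometric_samples_of_dini) (simp_all flip: finite)
qed

lemma prod_one_plus_le_exp_suminf:
  fixes f :: "nat \<Rightarrow> real"
  assumes f: "\<And>k. 0 \<le> f k" "summable f"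
  shows "(\<Prod>k<n. 1 + f k) \<le> exp (\<Sum>k. f k)"
proof -
  have "(\<Prod>k<n. 1 + f k) \<le> (\<Prod>k<n. exp (f k))"
    using f(1) by (intro prod_mono) (simp add: add_nonneg_nonneg)
  also have "\<dots> = exp (\<Sum>k<n. f k)"
    by (simp add: exp_sum)
  also have "\<dots> \<le> exp (\<Sum>k. f k)"
    using sum_le_suminf[OF f(2), of "{..<n}"] f(1) by simp
  finally show ?thesis .
qed

section \<open>Contractive Markov systems\<close>

locale contractive_markov_system =
  fixes N :: nat and E :: "'e set" and i t :: "'e \<Rightarrow> nat"
    and K :: "nat \<Rightarrow> 'a::complete_space set" and w :: "'e \<Rightarrow> 'a \<Rightarrow> 'a"
    and p :: "'e \<Rightarrow> 'a \<Rightarrow> real" and a :: real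
  assumes cms: "cms N E i t K w p a"
begin

lemma finite_E: "finite E"
  using cms by (simp add: cms_def)

lemma p_nonneg: "\<forall>e\<in>E. \<forall>y. 0 \<le> p e y"
  using cms by (simp add: cms_def)

lemma sum_p: "(\<Sum>e\<in>E. p e y) = 1"
  using cms by (simp add: cms_def)

lemma p_le_1: "e \<in> E \<Longrightarrow> 0 \<le> p e y \<and> p e y \<le> 1"
  using p_nonneg member_le_sum[of e E "\<lambda>e. p e y"] finite_E by (simp add: sum_p)

lemma a_bounds: "0 < a" "a < 1"
  using cms by (simp_all add: cms_def)

lemma is_Pm_Pm: "is_Pm E w p m x (Pm E w p m x)"
proof -
  have "\<exists>M. is_Pm E w p m x M"
    using finite_E p_nonneg by (rule exists_is_Pm) (simp add: sum_p)
  then show ?thesis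
    unfolding Pm_def by (rule someI_ex)
qed

lemma sets_Pm_eq_Am: "sets (Pm E w p m x) = sets (Am E m)"
  using is_Pm_Pm by (simp add: is_Pm_def)

lemma sets_Pm: "sets (Pm E w p m x) = sigma_sets (Sig E) (prefix_sets E m)"
  by (simp add: sets_Pm_eq_Am sets_Am_eq_prefix_sets[OF finite_E])

lemma null_sets_Pm_mix:
  assumes "A \<in> null_sets (Pm_mix N E w p m xs)" "j \<in> {1..N}"
  shows "A \<in> null_sets (Pm E w p m (xs j))"
proof -
  have sigma_Am: "sigma_algebra (Sig E) (sets (Am E m))"
    using sets.sigma_algebra_axioms[of "Am E m"] by (simp add: space_Am)
  have "sets (Pm_mix N E w p m xs) = sets (Am E m)"
    unfolding Pm_mix_def by (rule sigma_algebra.sets_measure_of_eq[OF sigma_Am])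
  then have A: "A \<in> sets (Am E m)" "emeasure (Pm_mix N E w p m xs) A = 0"
    using assms(1) by auto
  have "emeasure (Pm_mix N E w p m xs) A = (\<Sum>j = 1..N. emeasure (Pm E w p m (xs j)) A) / of_nat N"
    unfolding Pm_mix_def using sets_Pm_eq_Am A(1)
    by (intro emeasure_measure_of_sigma[OF sigma_Am] countably_additive_average)
       (auto simp: positive_def)
  then have "(\<Sum>j = 1..N. emeasure (Pm E w p m (xs j)) A) = 0"
    using A(2) by (simp add: ennreal_of_nat_neq_top)
  then show ?thesis
    using assms(2) A(1) sets_Pm_eq_Am by auto
qed

definition same_piece :: "'a \<Rightarrow> 'a \<Rightarrow> bool" where
  "same_piece x y \<longleftrightarrow> (\<exists>j\<in>{1..N}. x \<in> K j \<and> y \<in> K j)"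

lemma same_piece_step:
  assumes "same_piece x y" "e \<in> E" "p e x \<noteq> 0"
  shows "x \<in> K (i e)" "y \<in> K (i e)" "same_piece (w e x) (w e y)"
proof -
  have ie: "i e \<in> {1..N}" "t e \<in> {1..N}" and x: "x \<in> K (i e)"
    using cms assms(2,3) by (auto simp: cms_def)
  obtain j where j: "j \<in> {1..N}" "x \<in> K j" "y \<in> K j"
    using assms(1) by (auto simp: same_piece_def)
  moreover have "\<forall>j\<in>{1..N}. \<forall>k\<in>{1..N}. j \<noteq> k \<longrightarrow> K j \<inter> K k = {}"
    using cms by (simp add: cms_def)
  ultimately have "j = i e"
    using ie x by blast
  then show "x \<in> K (i e)" "y \<in> K (i e)"
    using x j by auto
  moreover have "w e ` K (i e) \<subseteq> K (t e)"
    using cms assms(2) by (simp add: cms_def)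
  ultimately show "same_piece (w e x) (w e y)"
    using ie unfolding same_piece_def by blast
qed

lemma average_contraction: "same_piece x y \<Longrightarrow> (\<Sum>e\<in>E. p e x * dist (w e x) (w e y)) \<le> a * dist x y"
  using cms unfolding cms_def same_piece_def by blast

lemma sum_cylprob_dist_fold_le:
  assumes "same_piece x y"
  shows "(\<Sum>es\<in>words E n. cylprob w p x es * dist (fold w es x) (fold w es y)) \<le> a ^ n * dist x y"
  using assms
proof (induction n arbitrary: x y)
  case 0
  then show ?case
    by (simp add: words_0)
next
  case (Suc n)
  have "(\<Sum>es\<in>words E (Suc n). cylprob w p x es * dist (fold w es x) (fold w es y)) =
      (\<Sum>e\<in>E. p e x * (\<Sum>l\<in>words E n. cylprob w p (w e x) l * dist (fold w l (w e x)) (fold w l (w e y))))"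
    by (simp add: sum_words_Suc[OF finite_E] sum_distrib_left mult.assoc)
  also have "\<dots> \<le> (\<Sum>e\<in>E. p e x * (a ^ n * dist (w e x) (w e y)))"
  proof (rule sum_mono)
    fix e assume e: "e \<in> E"
    show "p e x * (\<Sum>l\<in>words E n. cylprob w p (w e x) l * dist (fold w l (w e x)) (fold w l (w e y)))
        \<le> p e x * (a ^ n * dist (w e x) (w e y))"
    proof (cases "p e x = 0")
      case False
      then show ?thesis
        using Suc same_piece_step[OF Suc.prems e False] p_nonneg e by (intro mult_left_mono) auto
    qed simp
  qed
  also have "\<dots> = a ^ n * (\<Sum>e\<in>E. p e x * dist (w e x) (w e y))"
    by (simp add: sum_distrib_left algebra_simps)
  also have "\<dots> \<le> a ^ n * (a * dist x y)"
    using average_contraction[OF Suc.prems] a_bounds by (intro mult_left_mono) auto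
  finally show ?case
    by (simp add: mult_ac)
qed

lemma sum_cylprob_far_le:
  assumes "same_piece x y" "0 < \<rho>"
  shows "(\<Sum>es\<in>{es\<in>words E n. \<rho> < dist (fold w es x) (fold w es y)}. cylprob w p x es)
    \<le> a ^ n * dist x y / \<rho>"
proof -
  let ?F = "{es\<in>words E n. \<rho> < dist (fold w es x) (fold w es y)}"
  have cylprob: "0 \<le> cylprob w p x es" if "es \<in> words E n" for es
    using that p_nonneg by (intro cylprob_nonneg[of E]) (auto simp: words_def)
  have "(\<Sum>es\<in>?F. cylprob w p x es) \<le> (\<Sum>es\<in>?F. cylprob w p x es * dist (fold w es x) (fold w es y) / \<rho>)"
    using cylprob assms(2) by (intro sum_mono) (auto simp: le_divide_eq intro!: mult_left_mono)
  also have "\<dots> \<le> (\<Sum>es\<in>words E n. cylprob w p x es * dist (fold w es x) (fold w es y) / \<rho>)"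
    using cylprob assms(2) finite_words[OF finite_E] by (intro sum_mono2) auto
  also have "\<dots> \<le> a ^ n * dist x y / \<rho>"
    using sum_cylprob_dist_fold_le[OF assms(1), of n] assms(2)
    by (simp add: sum_divide_distrib[symmetric] divide_right_mono)
  finally show ?thesis .
qed

definition modulus_sum :: "real \<Rightarrow> real" where
  "modulus_sum r = (\<Sum>e\<in>E. enn2real (modulus (K (i e)) (p e) r))"

lemma modulus_sum_nonneg: "0 \<le> modulus_sum r"
  unfolding modulus_sum_def by (intro sum_nonneg) simp

lemma p_diff_le_modulus_sum:
  assumes "e \<in> E" "u \<in> K (i e)" "v \<in> K (i e)" "dist u v \<le> r"
  shows "\<bar>p e u - p e v\<bar> \<le> modulus_sum r"
proof -
  have "modulus (K (i e)) (p e) r \<le> 1"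
    using p_le_1[OF assms(1)] by (intro modulus_le_1) auto
  then have "\<bar>p e u - p e v\<bar> \<le> enn2real (modulus (K (i e)) (p e) r)"
    using modulus_upper[OF assms(2-4), of "p e"]
    by (metis abs_ge_zero enn2real_ennreal enn2real_mono ennreal_one_less_top le_less_trans)
  also have "\<dots> \<le> modulus_sum r"
    unfolding modulus_sum_def using finite_E assms(1) by (intro member_le_sum) auto
  finally show ?thesis .
qed

definition close_paths :: "int \<Rightarrow> (nat \<Rightarrow> real) \<Rightarrow> 'a \<Rightarrow> 'a \<Rightarrow> (int \<Rightarrow> 'e) set" where
  "close_paths m \<rho> x y =
     {\<sigma> \<in> Sig E. \<forall>k. dist (fold w (path_prefix m k \<sigma>) x) (fold w (path_prefix m k \<sigma>) y) \<le> \<rho> k}"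

lemma close_paths_in_Am: "close_paths m \<rho> x y \<in> sets (Am E m)"
proof -
  have "close_paths m \<rho> x y = (\<Inter>k. prefix_set E m k {es. dist (fold w es x) (fold w es y) \<le> \<rho> k})"
    by (auto simp: close_paths_def prefix_set_def)
  then show ?thesis
    using prefix_set_in_Am[OF finite_E] by auto
qed

lemma emeasure_not_close_paths_le:
  assumes "same_piece x y" "0 < R"
  defines "b \<equiv> sqrt a"
  shows "emeasure (Pm E w p m x) (Sig E - close_paths m (\<lambda>k. R * b ^ k) x y)
    \<le> ennreal (dist x y / (R * (1 - b)))"
proof -
  have b: "0 < b" "b < 1" "b\<^sup>2 = a"
    using a_bounds by (auto simp: b_def)
  define far where "far k = prefix_set E m k {es. R * b ^ k < dist (fold w es x) (fold w es y)}" for k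
  have far_sets: "far k \<in> sets (Pm E w p m x)" for k
    using prefix_set_in_Am[OF finite_E] by (simp add: sets_Pm_eq_Am far_def)
  have far_le: "emeasure (Pm E w p m x) (far k) \<le> ennreal (b ^ k * dist x y / R)" for k
  proof -
    have "emeasure (Pm E w p m x) (far k) =
        ennreal (\<Sum>es\<in>{es\<in>words E k. R * b ^ k < dist (fold w es x) (fold w es y)}. cylprob w p x es)"
    proof -
      have "{es. R * b ^ k < dist (fold w es x) (fold w es y)} \<inter> words E k =
          {es\<in>words E k. R * b ^ k < dist (fold w es x) (fold w es y)}"
        by auto
      moreover have "0 \<le> cylprob w p x es" if "es \<in> words E k" for es
        using that p_nonneg by (intro cylprob_nonneg[of E]) (auto simp: words_def)
      ultimately show ?thesis
        unfolding far_def emeasure_prefix_set[OF is_Pm_Pm finite_E] by (subst sum_ennreal) auto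
    qed
    also have "\<dots> \<le> ennreal (a ^ k * dist x y / (R * b ^ k))"
      using sum_cylprob_far_le[OF assms(1)] assms(2) b by (intro ennreal_leI) simp
    also have "a ^ k * dist x y / (R * b ^ k) = b ^ k * dist x y / R"
      using b by (simp flip: b(3) add: power_mult_distrib power2_eq_square)
    finally show ?thesis .
  qed
  have "Sig E - close_paths m (\<lambda>k. R * b ^ k) x y \<subseteq> (\<Union>k. far k)"
    by (auto simp: close_paths_def far_def prefix_set_def not_le)
  then have "emeasure (Pm E w p m x) (Sig E - close_paths m (\<lambda>k. R * b ^ k) x y)
      \<le> emeasure (Pm E w p m x) (\<Union>k. far k)"
    using far_sets by (intro emeasure_mono) auto
  also have "\<dots> \<le> (\<Sum>k. emeasure (Pm E w p m x) (far k))"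
    using far_sets by (intro emeasure_subadditive_countably) auto
  also have "\<dots> \<le> (\<Sum>k. ennreal (b ^ k * dist x y / R))"
    using far_le by (intro suminf_le) auto
  also have "\<dots> = ennreal (\<Sum>k. b ^ k * dist x y / R)"
    using b assms(2) by (intro suminf_ennreal2) (auto intro: summable_divide summable_mult2)
  also have "(\<Sum>k. b ^ k * dist x y / R) = dist x y / (R * (1 - b))"
  proof -
    have "(\<Sum>k. b ^ k * (dist x y / R)) = (\<Sum>k. b ^ k) * (dist x y / R)"
      using b by (intro suminf_mult2[symmetric] summable_geometric) simp
    moreover have "(\<Sum>k. b ^ k) = 1 / (1 - b)"
      using b by (intro suminf_geometric) simp
    ultimately show ?thesis
      using b by simp
  qed
  finally show ?thesis .
qed

end

locale dini_contractive_markov_system = contractive_markov_system +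
  fixes \<delta> :: real
  assumes \<delta>_pos: "0 < \<delta>" and p_ge_\<delta>: "\<forall>e\<in>E. \<forall>y\<in>K (i e). \<delta> \<le> p e y"
    and dini: "\<forall>e\<in>E. dini_continuous_on (K (i e)) (p e)"
begin

lemma summable_modulus_sum: "0 < R \<Longrightarrow> 0 < b \<Longrightarrow> b < 1 \<Longrightarrow> summable (\<lambda>k. modulus_sum (R * b ^ k))"
  unfolding modulus_sum_def using p_le_1 dini
  by (intro summable_sum summable_modulus_geometric_samples) auto

lemma p_le_mult_modulus_sum:
  assumes "e \<in> E" "u \<in> K (i e)" "v \<in> K (i e)" "dist u v \<le> r"
  shows "p e u \<le> p e v * (1 + modulus_sum r / \<delta>)"
proof -
  have "p e u \<le> p e v + modulus_sum r"
    using p_diff_le_modulus_sum[OF assms] by simp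
  also have "modulus_sum r \<le> p e v * (modulus_sum r / \<delta>)"
    using p_ge_\<delta> assms(1,3) \<delta>_pos modulus_sum_nonneg[of r]
    by (simp add: field_simps mult_right_mono)
  finally show ?thesis
    by (simp add: algebra_simps)
qed

lemma cylprob_le_prod:
  assumes "same_piece x y" "set es \<subseteq> E"
    and "\<forall>k<length es. dist (fold w (take k es) x) (fold w (take k es) y) \<le> r k"
  shows "cylprob w p x es \<le> (\<Prod>k<length es. 1 + modulus_sum (r k) / \<delta>) * cylprob w p y es"
  using assms
proof (induction es arbitrary: x y r)
  case (Cons e es)
  have e: "e \<in> E" and es: "set es \<subseteq> E"
    using Cons.prems(2) by auto
  have factor_nonneg: "0 \<le> 1 + modulus_sum r' / \<delta>" for r'
    using modulus_sum_nonneg[of r'] \<delta>_pos by (simp add: add_nonneg_nonneg)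
  show ?case
  proof (cases "p e x = 0")
    case True
    have "0 \<le> (\<Prod>k<length (e # es). 1 + modulus_sum (r k) / \<delta>) * cylprob w p y (e # es)"
      using factor_nonneg cylprob_nonneg[OF p_nonneg Cons.prems(2)]
      by (intro mult_nonneg_nonneg prod_nonneg) auto
    then show ?thesis
      using True by simp
  next
    case False
    note step = same_piece_step[OF Cons.prems(1) e False]
    have "p e x \<le> p e y * (1 + modulus_sum (r 0) / \<delta>)"
      using Cons.prems(3) step by (intro p_le_mult_modulus_sum[OF e]) (auto dest: spec[of _ 0])
    moreover have "cylprob w p (w e x) es \<le>
        (\<Prod>k<length es. 1 + modulus_sum (r (Suc k)) / \<delta>) * cylprob w p (w e y) es"
      using Cons.prems(3) by (intro Cons.IH[OF step(3) es]) auto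
    ultimately have "p e x * cylprob w p (w e x) es \<le>
        (p e y * (1 + modulus_sum (r 0) / \<delta>)) *
        ((\<Prod>k<length es. 1 + modulus_sum (r (Suc k)) / \<delta>) * cylprob w p (w e y) es)"
      using p_nonneg e factor_nonneg[of "r 0"] cylprob_nonneg[OF p_nonneg es, of w "w e x"]
      by (intro mult_mono) auto
    then show ?thesis
      by (simp only: length_Cons prod.lessThan_Suc_shift cylprob.simps mult_ac)
  qed
qed simp

lemma emeasure_Int_close_paths_le:
  assumes "same_piece x y" "summable (\<lambda>k. modulus_sum (\<rho> k))" "B \<in> prefix_sets E m"
  shows "emeasure (Pm E w p m x) (B \<inter> close_paths m \<rho> x y)
    \<le> ennreal (exp (\<Sum>k. modulus_sum (\<rho> k) / \<delta>)) * emeasure (Pm E w p m y) B"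
proof -
  define C where "C = exp (\<Sum>k. modulus_sum (\<rho> k) / \<delta>)"
  obtain n L where B: "B = prefix_set E m n L"
    using assms(3) by (auto simp: prefix_sets_def)
  define close where
    "close = {es. \<forall>k<n. dist (fold w (take k es) x) (fold w (take k es) y) \<le> \<rho> k}"
  have ratio: "cylprob w p x es \<le> C * cylprob w p y es" if "es \<in> close \<inter> words E n" for es
  proof -
    have "cylprob w p x es \<le> (\<Prod>k<n. 1 + modulus_sum (\<rho> k) / \<delta>) * cylprob w p y es"
      using that cylprob_le_prod[OF assms(1)] by (auto simp: close_def words_def)
    also have "\<dots> \<le> C * cylprob w p y es"
      unfolding C_def using that p_nonneg modulus_sum_nonneg \<delta>_pos assms(2)
      by (intro mult_right_mono prod_one_plus_le_exp_suminf summable_divide cylprob_nonneg[of E])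
         (auto simp: words_def)
    finally show ?thesis .
  qed
  have "B \<inter> close_paths m \<rho> x y \<subseteq> prefix_set E m n (L \<inter> close)"
    by (auto simp: B close_def close_paths_def prefix_set_def take_path_prefix)
  then have "emeasure (Pm E w p m x) (B \<inter> close_paths m \<rho> x y)
      \<le> emeasure (Pm E w p m x) (prefix_set E m n (L \<inter> close))"
    using prefix_set_in_Am[OF finite_E] by (intro emeasure_mono) (auto simp: sets_Pm_eq_Am)
  also have "\<dots> = (\<Sum>es\<in>L \<inter> close \<inter> words E n. ennreal (cylprob w p x es))"
    by (rule emeasure_prefix_set[OF is_Pm_Pm finite_E])
  also have "\<dots> \<le> (\<Sum>es\<in>L \<inter> close \<inter> words E n. ennreal (C * cylprob w p y es))"
    using ratio by (intro sum_mono ennreal_leI) auto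
  also have "\<dots> \<le> (\<Sum>es\<in>L \<inter> words E n. ennreal (C * cylprob w p y es))"
    using finite_words[OF finite_E] by (intro sum_mono2) auto
  also have "\<dots> = ennreal C * emeasure (Pm E w p m y) B"
    unfolding B emeasure_prefix_set[OF is_Pm_Pm finite_E] sum_distrib_left
    by (intro sum.cong refl) (simp add: C_def ennreal_mult')
  finally show ?thesis
    unfolding C_def .
qed

lemma emeasure_Pm_le_of_null:
  assumes "same_piece x y" "A \<in> null_sets (Pm E w p m y)" "0 < R"
  shows "emeasure (Pm E w p m x) A \<le> ennreal (dist x y / (R * (1 - sqrt a)))"
proof -
  define G where "G = close_paths m (\<lambda>k. R * sqrt a ^ k) x y"
  have A: "A \<in> sets (Am E m)"
    using null_setsD2[OF assms(2)] by (simp add: sets_Pm_eq_Am)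
  then have "A \<subseteq> Sig E"
    using sets.sets_into_space space_Am by metis
  have G: "G \<in> sets (Am E m)" "Sig E - G \<in> sets (Am E m)"
    unfolding G_def using close_paths_in_Am sets.compl_sets[of _ "Am E m"] by (auto simp: space_Am)
  define C where "C = exp (\<Sum>k. modulus_sum (R * sqrt a ^ k) / \<delta>)"
  have summable: "summable (\<lambda>k. modulus_sum (R * sqrt a ^ k))"
    using a_bounds assms(3) by (intro summable_modulus_sum) auto
  have dominated: "emeasure (Pm E w p m x) (B \<inter> G) \<le> ennreal C * emeasure (Pm E w p m y) B"
    if "B \<in> prefix_sets E m" for B
    unfolding G_def C_def using assms(1) summable that by (rule emeasure_Int_close_paths_le)
  have "emeasure (Pm E w p m y) (Sig E) \<noteq> \<infinity>"
    using is_Pm_Pm[of m y] unfolding is_Pm_def space_is_Pm[OF is_Pm_Pm] by simp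
  moreover have "G \<in> sets (Pm E w p m x)" "0 < C"
    using G(1) by (simp_all add: C_def sets_Pm_eq_Am)
  ultimately have "emeasure (Pm E w p m x) (A \<inter> G) = 0"
    using dominated assms(2)
    by (intro null_set_Int_of_dominated_on_ring[OF ring_of_sets_prefix_sets Sig_in_prefix_sets
          sets_Pm sets_Pm]) auto
  moreover have "emeasure (Pm E w p m x) A \<le>
      emeasure (Pm E w p m x) (A \<inter> G) + emeasure (Pm E w p m x) (Sig E - G)"
    using A \<open>A \<subseteq> Sig E\<close> G
    by (intro emeasure_subadditive[THEN order_trans[rotated]] emeasure_mono) (auto simp: sets_Pm_eq_Am)
  ultimately have "emeasure (Pm E w p m x) A \<le> emeasure (Pm E w p m x) (Sig E - G)"
    by simp
  also have "\<dots> \<le> ennreal (dist x y / (R * (1 - sqrt a)))"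
    unfolding G_def by (rule emeasure_not_close_paths_le[OF assms(1,3)])
  finally show ?thesis .
qed

lemma null_sets_Pm_same_piece:
  assumes "same_piece x y" "A \<in> null_sets (Pm E w p m y)"
  shows "A \<in> null_sets (Pm E w p m x)"
proof -
  have b: "0 < 1 - sqrt a"
    using a_bounds by simp
  have small: "emeasure (Pm E w p m x) A \<le> ennreal \<epsilon>" if "0 < \<epsilon>" for \<epsilon>
  proof -
    define R where "R = (dist x y + 1) / (\<epsilon> * (1 - sqrt a))"
    have R: "0 < R"
      using b \<open>0 < \<epsilon>\<close> by (simp add: R_def add_nonneg_pos)
    have "dist x y / (dist x y + 1) \<le> 1"
      by (simp add: divide_le_eq add_nonneg_pos)
    then have "\<epsilon> * (dist x y / (dist x y + 1)) \<le> \<epsilon>"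
      using \<open>0 < \<epsilon>\<close> by (intro mult_left_le) auto
    moreover have "dist x y / (R * (1 - sqrt a)) = \<epsilon> * (dist x y / (dist x y + 1))"
      using b \<open>0 < \<epsilon>\<close> by (simp add: R_def)
    ultimately have "dist x y / (R * (1 - sqrt a)) \<le> \<epsilon>"
      by simp
    with emeasure_Pm_le_of_null[OF assms R] show ?thesis
      by (meson ennreal_leI order_trans)
  qed
  have "emeasure (Pm E w p m x) A \<le> 0"
    by (rule ennreal_le_epsilon) (simp add: small)
  moreover have "A \<in> sets (Pm E w p m x)"
    using null_setsD2[OF assms(2)] by (simp add: sets_Pm)
  ultimately show ?thesis
    by (simp add: null_sets_def)
qed

end

theorem lemma6:
  fixes N :: nat and E :: "'e set" and i t :: "'e \<Rightarrow> nat"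
    and K :: "nat \<Rightarrow> 'a::complete_space set" and w :: "'e \<Rightarrow> 'a \<Rightarrow> 'a"
    and p :: "'e \<Rightarrow> 'a \<Rightarrow> real" and a :: real
    and xs :: "nat \<Rightarrow> 'a" and x :: 'a and m :: int
  assumes "cms N E i t K w p a"
    and "\<forall>e\<in>E. dini_continuous_on (K (i e)) (p e)"
    and "\<exists>\<delta>>0. \<forall>e\<in>E. \<forall>y\<in>K (i e). p e y \<ge> \<delta>"
    and "\<forall>j\<in>{1..N}. xs j \<in> K j"
    and "m \<le> 0"
  shows "absolutely_continuous (Pm_mix N E w p m xs) (Pm E w p m x)"
proof -
  obtain \<delta> where "0 < \<delta>" "\<forall>e\<in>E. \<forall>y\<in>K (i e). \<delta> \<le> p e y"
    using assms(3) by blast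
  then interpret dini_contractive_markov_system N E i t K w p a \<delta>
    using assms(1,2) by unfold_locales
  have "x \<in> (\<Union>j\<in>{1..N}. K j)"
    using assms(1) by (simp add: cms_def)
  then obtain j where j: "j \<in> {1..N}" "x \<in> K j"
    by blast
  then have "same_piece x (xs j)"
    using assms(4) unfolding same_piece_def by blast
  show ?thesis
    unfolding absolutely_continuous_def
    using null_sets_Pm_mix[OF _ j(1)] null_sets_Pm_same_piece[OF \<open>same_piece x (xs j)\<close>] by blast
qed

end
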